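(* Let $d\ge 1$ and let $\lambda=(\lambda_1,\dots,\lambda_d)$ be a vector of positive integers with $\sum_{i=1}^d\lambda_i=n\ge 2$. For each integer $b$ with $0\le b<n-1$, the point \[ p(b)=\left(\left(\sum_{i=1}^d\left\lceil \frac{b\lambda_i}{n-1}\right\rceil\right)-b,\; \left\lceil \frac{b\lambda_1}{n-1}\right\rceil,\;\dots,\;\left\lceil \frac{b\lambda_d}{n-1}\right\rceil\right)\in\mathbb{Z}^{d+1} \] lies in $\Pi_\lambda$, the points $p(0),\dots,p(n-2)$ are distinct, and every point of $\Pi_\lambda\cap\mathbb{Z}^{d+1}$ is of the form $p(b)$ for some $0\le b<n-1$. That is, $b\mapsto p(b)$ is a bijection from $\{0,1,\dots,n-2\}$ onto $\Pi_\lambda\cap\mathbb{Z}^{d+1}$.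
   Context: $e_1,\dots,e_d$ are the standard basis vectors of $\mathbb{R}^d$, and $\Delta_\lambda=\mathrm{conv}(e_1,\dots,e_d,\lambda)\subset\mathbb{R}^d$. The fundamental parallelepiped of $\Delta_\lambda$ is $\Pi_\lambda=\left\{\sum_{i=1}^d\gamma_i(1,e_i)+\gamma_{d+1}(1,\lambda): 0\le\gamma_i<1 \text{ for all } i\right\}\subset\mathbb{R}^{d+1}$. *)

theory Defs
  imports Complex_Main
begin

text \<open>Points of R^(d+1) are represented as functions nat => real with coordinates
  indexed 0..d (coordinate 0 is the extra "height" coordinate) and value 0 elsewhere.
  The vector lambda in Z^d is a function nat => nat, used on indices 1..d.\<close>

definition fund_par :: "nat \<Rightarrow> (nat \<Rightarrow> nat) \<Rightarrow> (nat \<Rightarrow> real) set" where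
  "fund_par d lam = {x. \<exists>\<gamma> :: nat \<Rightarrow> real.
      (\<forall>i\<in>{1..d+1}. 0 \<le> \<gamma> i \<and> \<gamma> i < 1) \<and>
      x = (\<lambda>j. if j = 0 then (\<Sum>i=1..d+1. \<gamma> i)
               else if j \<le> d then \<gamma> j + \<gamma> (d+1) * real (lam j)
               else 0)}"

definition int_points :: "nat \<Rightarrow> (nat \<Rightarrow> real) set" where
  "int_points d = {x. (\<forall>j\<le>d. x j \<in> \<int>) \<and> (\<forall>j>d. x j = 0)}"

definition pt :: "nat \<Rightarrow> (nat \<Rightarrow> nat) \<Rightarrow> nat \<Rightarrow> (nat \<Rightarrow> real)" where
  "pt d lam b = (let n = (\<Sum>i=1..d. lam i);
                    c = (\<lambda>i. \<lceil>real b * real (lam i) / real (n - 1)\<rceil>) in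
     (\<lambda>j. if j = 0 then real_of_int ((\<Sum>i=1..d. c i) - int b)
          else if j \<le> d then real_of_int (c j) else 0))"

end

theory Submission
  imports Defs
begin

text \<open>A point of \<open>\<Pi>\<^sub>\<lambda>\<close> with coefficients \<open>\<gamma>\<close> has coordinates \<open>x\<^sub>j = \<gamma>\<^sub>j + t \<lambda>\<^sub>j\<close> (\<open>1 \<le> j \<le> d\<close>), where
  \<open>t = \<gamma>\<^sub>d\<^sub>+\<^sub>1\<close>, and height \<open>x\<^sub>0 = \<Sum>\<^sub>j x\<^sub>j - t (n - 1)\<close>. Since \<open>0 \<le> \<gamma>\<^sub>j < 1\<close>, the coordinate \<open>x\<^sub>j\<close> is an
  integer only if \<open>x\<^sub>j = \<lceil>t \<lambda>\<^sub>j\<rceil>\<close>, so an integral point is determined by \<open>t\<close>; and then \<open>x\<^sub>0\<close> is an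
  integer iff \<open>t (n - 1) = b\<close> is, with \<open>0 \<le> b < n - 1\<close>. Conversely \<open>b\<close> is recovered from the point
  as \<open>\<Sum>\<^sub>j x\<^sub>j - x\<^sub>0\<close>.\<close>

definition fund_par_point :: "nat \<Rightarrow> (nat \<Rightarrow> nat) \<Rightarrow> (nat \<Rightarrow> real) \<Rightarrow> (nat \<Rightarrow> real)" where
  "fund_par_point d lam \<gamma> = (\<lambda>j. if j = 0 then (\<Sum>i=1..d+1. \<gamma> i)
      else if j \<le> d then \<gamma> j + \<gamma> (d+1) * real (lam j) else 0)"

lemma mem_fund_par_iff:
  "x \<in> fund_par d lam \<longleftrightarrow>
    (\<exists>\<gamma>. (\<forall>i\<in>{1..d+1}. 0 \<le> \<gamma> i \<and> \<gamma> i < 1) \<and> x = fund_par_point d lam \<gamma>)"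
  unfolding fund_par_def fund_par_point_def by blast

lemma fund_par_point_cong:
  assumes "\<And>i. i \<in> {1..d+1} \<Longrightarrow> \<gamma> i = \<gamma>' i"
  shows "fund_par_point d lam \<gamma> = fund_par_point d lam \<gamma>'"
  using assms unfolding fund_par_point_def by (intro ext) (auto intro!: sum.cong)

lemma fund_par_point_height:
  "(\<Sum>j=1..d. fund_par_point d lam \<gamma> j) - fund_par_point d lam \<gamma> 0
     = \<gamma> (d+1) * (real (\<Sum>i=1..d. lam i) - 1)"
  by (simp add: fund_par_point_def sum.distrib sum_distrib_left algebra_simps)

lemma frac_eq_ceiling_diff:
  fixes g s :: real
  assumes "0 \<le> g" "g < 1" "g + s \<in> \<int>"
  shows "g = of_int \<lceil>s\<rceil> - s"
proof -
  obtain m where m: "g + s = of_int m" using assms(3) by (metis Ints_cases)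
  with assms(1,2) have "\<lceil>s\<rceil> = m" by (intro ceiling_unique) linarith+
  with m show ?thesis by simp
qed

definition ceiling_coeffs :: "nat \<Rightarrow> (nat \<Rightarrow> nat) \<Rightarrow> real \<Rightarrow> nat \<Rightarrow> real" where
  "ceiling_coeffs d lam t i =
     (if i = d+1 then t else of_int \<lceil>t * real (lam i)\<rceil> - t * real (lam i))"

lemma ceiling_coeffs_bounds:
  assumes "0 \<le> t" "t < 1"
  shows "\<forall>i\<in>{1..d+1}. 0 \<le> ceiling_coeffs d lam t i \<and> ceiling_coeffs d lam t i < 1"
proof
  fix i
  have "0 \<le> of_int \<lceil>s\<rceil> - s \<and> of_int \<lceil>s\<rceil> - s < 1" for s :: real
    by linarith
  with assms show "0 \<le> ceiling_coeffs d lam t i \<and> ceiling_coeffs d lam t i < 1"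
    by (simp add: ceiling_coeffs_def)
qed

lemma fund_par_point_eq_ceiling_coeffs:
  assumes bounds: "\<forall>i\<in>{1..d+1}. 0 \<le> \<gamma> i \<and> \<gamma> i < 1"
    and integral: "\<forall>j\<in>{1..d}. fund_par_point d lam \<gamma> j \<in> \<int>"
  shows "fund_par_point d lam \<gamma> = fund_par_point d lam (ceiling_coeffs d lam (\<gamma> (d+1)))"
proof (rule fund_par_point_cong)
  fix i assume i: "i \<in> {1..d+1}"
  show "\<gamma> i = ceiling_coeffs d lam (\<gamma> (d+1)) i"
  proof (cases "i = d+1")
    case False
    with i have "\<gamma> i + \<gamma> (d+1) * real (lam i) \<in> \<int>"
      using integral by (auto simp: fund_par_point_def)
    with False i bounds show ?thesis
      by (auto simp: ceiling_coeffs_def intro: frac_eq_ceiling_diff)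
  qed (simp add: ceiling_coeffs_def)
qed

lemma pt_eq_fund_par_point:
  assumes n: "n = (\<Sum>i=1..d. lam i)" and "n \<ge> 2"
  shows "pt d lam b = fund_par_point d lam (ceiling_coeffs d lam (real b / real (n - 1)))"
    (is "_ = ?x")
proof
  fix j
  define t where "t = real b / real (n - 1)"
  have "t * (real n - 1) = real b"
    using \<open>n \<ge> 2\<close> by (simp add: t_def of_nat_diff)
  then have height: "?x 0 = (\<Sum>j=1..d. ?x j) - real b"
    using fund_par_point_height[of d lam "ceiling_coeffs d lam t", folded n]
    by (simp add: t_def ceiling_coeffs_def)
  have coords: "?x j = of_int \<lceil>real b * real (lam j) / real (n - 1)\<rceil>"
    if "j \<in> {1..d}" for j
    using that by (simp add: fund_par_point_def ceiling_coeffs_def)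
  show "pt d lam b j = ?x j"
  proof (cases "j = 0")
    case True
    with height coords n show ?thesis
      by (simp add: pt_def Let_def of_int_sum)
  qed (auto simp: pt_def Let_def n fund_par_point_def ceiling_coeffs_def)
qed

lemma pt_in_int_points: "pt d lam b \<in> int_points d"
  by (auto simp: pt_def Let_def int_points_def intro!: Ints_sum)

lemma pt_height: "(\<Sum>j=1..d. pt d lam b j) - pt d lam b 0 = real b"
  by (simp add: pt_def Let_def)

lemma inj_on_pt: "inj_on (pt d lam) A"
  by (rule inj_onI) (metis pt_height of_nat_eq_iff)

lemma pt_in_fund_par:
  assumes "n = (\<Sum>i=1..d. lam i)" "n \<ge> 2" "b < n - 1"
  shows "pt d lam b \<in> fund_par d lam"
proof -
  have "0 \<le> real b / real (n - 1)" "real b / real (n - 1) < 1"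
    using assms(3) by auto
  then show ?thesis
    unfolding mem_fund_par_iff pt_eq_fund_par_point[OF assms(1,2)]
    using ceiling_coeffs_bounds by blast
qed

lemma fund_par_int_points_subset_image_pt:
  assumes n: "n = (\<Sum>i=1..d. lam i)" and "n \<ge> 2"
  shows "fund_par d lam \<inter> int_points d \<subseteq> pt d lam ` {0..<n-1}"
proof
  fix x assume x: "x \<in> fund_par d lam \<inter> int_points d"
  obtain \<gamma> where bounds: "\<forall>i\<in>{1..d+1}. 0 \<le> \<gamma> i \<and> \<gamma> i < 1"
    and x_eq: "x = fund_par_point d lam \<gamma>"
    using x mem_fund_par_iff by blast
  define t where "t = \<gamma> (d+1)"
  have t: "0 \<le> t" "t < 1" using bounds by (auto simp: t_def)
  have integral: "\<forall>j\<le>d. x j \<in> \<int>" using x by (simp add: int_points_def)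
  have "(\<Sum>j=1..d. x j) - x 0 \<in> \<int>"
    using integral by (intro Ints_diff Ints_sum) auto
  then have "t * real (n - 1) \<in> \<int>"
    using fund_par_point_height[of d lam \<gamma>] \<open>n \<ge> 2\<close>
    by (simp add: x_eq t_def n of_nat_diff)
  moreover have "0 \<le> t * real (n - 1)" using t by simp
  ultimately obtain b where b: "t * real (n - 1) = real b"
    by (metis Ints_cases of_int_0_le_iff of_nat_nat)
  have "real b < real (n - 1)"
    using b t \<open>n \<ge> 2\<close> mult_strict_right_mono[of t 1 "real (n - 1)"] by simp
  then have "b \<in> {0..<n-1}" by simp
  moreover have "x = pt d lam b"
  proof -
    have "x = fund_par_point d lam (ceiling_coeffs d lam t)"
      using fund_par_point_eq_ceiling_coeffs[OF bounds] integral x_eq t_def by auto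
    also have "t = real b / real (n - 1)" using b \<open>n \<ge> 2\<close> by (simp add: field_simps)
    finally show ?thesis using pt_eq_fund_par_point[OF n \<open>n \<ge> 2\<close>] by simp
  qed
  ultimately show "x \<in> pt d lam ` {0..<n-1}" by blast
qed

theorem proposition2p12:
  fixes d :: nat and lam :: "nat \<Rightarrow> nat" and n :: nat
  assumes "d \<ge> 1"
    and "\<forall>i\<in>{1..d}. lam i > 0"
    and "n = (\<Sum>i=1..d. lam i)"
    and "n \<ge> 2"
  shows "bij_betw (pt d lam) {0..<n-1} (fund_par d lam \<inter> int_points d)"
proof (unfold bij_betw_def, intro conjI equalityI)
  show "inj_on (pt d lam) {0..<n-1}" by (rule inj_on_pt)
  show "pt d lam ` {0..<n-1} \<subseteq> fund_par d lam \<inter> int_points d"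
    using pt_in_fund_par[OF assms(3,4)] pt_in_int_points by auto
  show "fund_par d lam \<inter> int_points d \<subseteq> pt d lam ` {0..<n-1}"
    using fund_par_int_points_subset_image_pt[OF assms(3,4)] .
qed

end
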